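(* In Model B below, assume $l\mid d$, $l\to\infty$ and $lp\to0$ as $d\to\infty$. Then for the $c$-segmentation rule with $c=d/l$, $$\mathbb{P}(w\text{ is misclassified})\to0\quad\text{as }d\to\infty.$$
   Context: Segmentation rule. Let $d,c$ be positive integers with $c\mid d$. For $x\in\mathbb{R}^d$ and $1\le j\le c$ let $x_j\in\mathbb{R}^{d/c}$ denote its $j$-th block $(x_{(j-1)d/c+1},\dots,x_{jd/c})$, so that $x=x_1\circ\cdots\circ x_c$ (concatenation). Given dictionary words $w^1,\dots,w^K\in\mathbb{R}^d$ ($w^k$ representing class $k$) and a test word $w\in\mathbb{R}^d$, for each $j$ let $U_j\in\{1,\dots,K\}$ be an index $k$ minimizing the Euclidean distance $\|w_j-w^k_j\|$ in $\mathbb{R}^{d/c}$, chosen uniformly at random among all minimizers (independently of everything else). The $c$-segmentation rule assigns to $w$ the class $\chi(w)\in\operatorname{argmax}_k\#\{j:U_j=k\}$, chosen uniformly at random among all maximizers. The case $c=1$ is the Euclidean (nearest-neighbour) rule and $c=d$ is coordinate-by-coordinate comparison. $w$ is classified correctly if $\chi(w)$ equals its true class, misclassified otherwise. Probabilities are over all random objects including tie-breaks. Model B. Let $d\ge1$, an integer $l\ge1$, $N>0$ and $p\in(0,1)$ be given (the last three may depend on $d$). Let $m_1=0\in\mathbb{R}^d$ and let $m_2\in\mathbb{R}^d$ have $(m_2)_i=1$ if $i\equiv1\pmod l$ and $(m_2)_i=0$ otherwise. Let $Y^{(0)},Y^{(1)},Y^{(2)}$ be independent random vectors in $\mathbb{R}^d$,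 each with i.i.d. coordinates satisfying $\mathbb{P}(Y_i=N)=p$, $\mathbb{P}(Y_i=0)=1-p$. There are $K=2$ classes; the dictionary words are $w^1=m_1+Y^{(1)}$ (class 1) and $w^2=m_2+Y^{(2)}$ (class 2), and the test word is $w=m_1+Y^{(0)}$ (true class 1). *)

theory Defs
  imports "HOL-Probability.Probability"
begin

text \<open>Vectors in R^d are represented as functions nat => real; coordinate i
  (0-indexed, i < d) corresponds to the paper's coordinate i+1.
  Blocks are 0-indexed: block j (j < c) consists of coordinates
  j*(d div c) ..< (j+1)*(d div c).\<close>

definition block_dist :: "nat \<Rightarrow> nat \<Rightarrow> nat \<Rightarrow> (nat \<Rightarrow> real) \<Rightarrow> (nat \<Rightarrow> real) \<Rightarrow> real" where
  "block_dist d c j x y =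
     sqrt (\<Sum>i<d div c. (x (j * (d div c) + i) - y (j * (d div c) + i))^2)"

definition nearest_set :: "nat \<Rightarrow> nat \<Rightarrow> nat \<Rightarrow> (nat \<Rightarrow> nat \<Rightarrow> real) \<Rightarrow> (nat \<Rightarrow> real) \<Rightarrow> nat \<Rightarrow> nat set" where
  "nearest_set d c K W w j =
     {k \<in> {1..K}. \<forall>k'\<in>{1..K}. block_dist d c j w (W k) \<le> block_dist d c j w (W k')}"

definition vote_count :: "nat \<Rightarrow> (nat \<Rightarrow> nat) \<Rightarrow> nat \<Rightarrow> nat" where
  "vote_count c U k = card {j. j < c \<and> U j = k}"

definition argmax_set :: "nat \<Rightarrow> nat \<Rightarrow> (nat \<Rightarrow> nat) \<Rightarrow> nat set" where
  "argmax_set c K U = {k \<in> {1..K}. \<forall>k'\<in>{1..K}. vote_count c U k' \<le> vote_count c U k}"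

definition seg_rule :: "nat \<Rightarrow> nat \<Rightarrow> nat \<Rightarrow> (nat \<Rightarrow> nat \<Rightarrow> real) \<Rightarrow> (nat \<Rightarrow> real) \<Rightarrow> nat pmf" where
  "seg_rule d c K W w =
     do { U \<leftarrow> Pi_pmf {..<c} 0 (\<lambda>j. pmf_of_set (nearest_set d c K W w j));
          pmf_of_set (argmax_set c K U) }"

definition coord_pmf :: "real \<Rightarrow> real \<Rightarrow> real pmf" where
  "coord_pmf N p = map_pmf (\<lambda>b. if b then N else 0) (bernoulli_pmf p)"

definition noise_vec :: "nat \<Rightarrow> real \<Rightarrow> real \<Rightarrow> (nat \<Rightarrow> real) pmf" where
  "noise_vec d N p = Pi_pmf {..<d} 0 (\<lambda>_. coord_pmf N p)"

text \<open>Model B means: m1 = 0, m2 has entry 1 at paper-coordinates i = 1 mod l,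
  i.e. at 0-indexed coordinates i with i mod l = 0.\<close>
definition m2B :: "nat \<Rightarrow> nat \<Rightarrow> nat \<Rightarrow> real" where
  "m2B d l i = (if i < d \<and> i mod l = 0 then 1 else 0)"

definition misclass_B :: "nat \<Rightarrow> nat \<Rightarrow> nat \<Rightarrow> real \<Rightarrow> real \<Rightarrow> real" where
  "misclass_B d c l N p =
     measure_pmf.prob
       (do { Y0 \<leftarrow> noise_vec d N p;
             Y1 \<leftarrow> noise_vec d N p;
             Y2 \<leftarrow> noise_vec d N p;
             seg_rule d c 2 (\<lambda>k. if k = 1 then Y1 else (\<lambda>i. m2B d l i + Y2 i)) Y0 })
       {k. k \<noteq> 1}"

end

theory Submission
  imports Defs
begin

text \<open>With \<open>c = d/l\<close> blocks of length \<open>l\<close>, the mean \<open>m\<^sub>2\<close> has a 1 at the first coordinate of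
  every block. A block on which all three noise vectors vanish therefore has distance 0 to
  the class-1 word and positive distance to the class-2 word, so it votes for class 1.
  Misclassification thus requires at least half of the blocks to carry some noise. A block
  is noisy with probability at most \<open>3lp\<close> (union bound), so by Markov's inequality for the
  number of noisy blocks the error probability is at most \<open>6lp \<longrightarrow> 0\<close>.\<close>

lemma prob_card_events_ge_le:
  fixes M :: "'a pmf" and E :: "'i \<Rightarrow> 'a set" and r :: real
  assumes "finite J" "r > 0"
  shows "measure_pmf.prob M {x. r \<le> card {j\<in>J. x \<in> E j}} \<le> (\<Sum>j\<in>J. measure_pmf.prob M (E j)) / r"
proof -
  have card_eq: "real (card {j\<in>J. x \<in> E j}) = (\<Sum>j\<in>J. indicator (E j) x)" for x
    using assms(1) by (simp add: indicator_def sum.If_cases Int_def)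
  have int: "integrable M (indicator (E j) :: _ \<Rightarrow> real)" for j
    by (rule measure_pmf.integrable_const_bound[where B = 1]) auto
  have "measure_pmf.prob M {x\<in>space M. r \<le> (\<Sum>j\<in>J. indicator (E j) x)}
      \<le> measure_pmf.expectation M (\<lambda>x. \<Sum>j\<in>J. indicator (E j) x) / r"
    by (intro integral_Markov_inequality_measure[where A = UNIV])
       (use assms int in \<open>auto intro: sum_nonneg\<close>)
  also have "measure_pmf.expectation M (\<lambda>x. \<Sum>j\<in>J. indicator (E j) x) = (\<Sum>j\<in>J. measure_pmf.prob M (E j))"
    by (simp add: int)
  finally show ?thesis
    by (simp add: card_eq)
qed

lemma prob_bind_pmf_le:
  assumes "\<And>x. x \<in> set_pmf M \<Longrightarrow> x \<notin> A \<Longrightarrow> set_pmf (f x) \<inter> B = {}"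
  shows "measure_pmf.prob (bind_pmf M f) B \<le> measure_pmf.prob M A"
proof -
  have "emeasure (bind_pmf M f) B = (\<integral>\<^sup>+x. emeasure (f x) B \<partial>M)"
    by simp
  also have "\<dots> \<le> (\<integral>\<^sup>+x. indicator A x \<partial>M)"
  proof (rule nn_integral_mono_AE)
    show "AE x in M. emeasure (f x) B \<le> indicator A x"
      using assms by (auto simp: AE_measure_pmf_iff indicator_def measure_pmf.emeasure_le_1
          measure_pmf_zero_iff measure_pmf.emeasure_eq_measure)
  qed
  also have "\<dots> = emeasure M A"
    by simp
  finally show ?thesis
    by (simp add: measure_pmf.emeasure_eq_measure)
qed

lemma prob_pair_pmf_triple_le:
  fixes M :: "'a pmf"
  shows "measure_pmf.prob (pair_pmf M (pair_pmf M M)) {t. fst t \<in> A \<or> fst (snd t) \<in> A \<or> snd (snd t) \<in> A}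
    \<le> 3 * measure_pmf.prob M A"
proof -
  let ?J = "pair_pmf M (pair_pmf M M)"
  have marginal: "measure_pmf.prob ?J (g -` A) = measure_pmf.prob M A"
    if "map_pmf g ?J = M" for g
    using that measure_map_pmf[of g ?J A] by simp
  have "{t. fst t \<in> A \<or> fst (snd t) \<in> A \<or> snd (snd t) \<in> A}
      = fst -` A \<union> ((fst \<circ> snd) -` A \<union> (snd \<circ> snd) -` A)"
    by auto
  also have "measure_pmf.prob ?J \<dots> \<le> measure_pmf.prob ?J (fst -` A)
      + (measure_pmf.prob ?J ((fst \<circ> snd) -` A) + measure_pmf.prob ?J ((snd \<circ> snd) -` A))"
    by (intro measure_Un_le[THEN order_trans] add_left_mono measure_Un_le) auto
  also have "\<dots> = 3 * measure_pmf.prob M A"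
    by (simp add: marginal pmf.map_comp[symmetric] map_fst_pair_pmf map_snd_pair_pmf)
  finally show ?thesis .
qed

lemma bind_pmf_triple_eq_bind_pair_pmf:
  "bind_pmf M (\<lambda>a. bind_pmf M (\<lambda>b. bind_pmf M (\<lambda>e. S a b e)))
   = bind_pmf (pair_pmf M (pair_pmf M M)) (\<lambda>t. S (fst t) (fst (snd t)) (snd (snd t)))"
  by (simp add: pair_pmf_def bind_assoc_pmf bind_return_pmf)

lemma prob_noise_vec_coord_nonzero:
  fixes N p :: real
  assumes "i < d" "N \<noteq> 0" "0 \<le> p" "p \<le> 1"
  shows "measure_pmf.prob (noise_vec d N p) {a. a i \<noteq> 0} = p"
proof -
  have "map_pmf (\<lambda>a. a i) (noise_vec d N p) = coord_pmf N p"
    unfolding noise_vec_def using assms by (simp add: Pi_pmf_component)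
  then have "measure_pmf.prob (noise_vec d N p) {a. a i \<noteq> 0} = measure_pmf.prob (coord_pmf N p) {y. y \<noteq> 0}"
    using measure_map_pmf[of "\<lambda>a. a i" "noise_vec d N p" "{y. y \<noteq> 0}"] by (simp add: vimage_def)
  also have "\<dots> = measure_pmf.prob (bernoulli_pmf p) {True}"
    unfolding coord_pmf_def measure_map_pmf using assms
    by (intro arg_cong[where f = "measure_pmf.prob _"]) auto
  also have "\<dots> = p"
    using assms by (simp add: measure_pmf_single)
  finally show ?thesis .
qed

lemma prob_noise_vec_nonzero_on_le:
  fixes N p :: real
  assumes "I \<subseteq> {..<d}" "N \<noteq> 0" "0 \<le> p" "p \<le> 1"
  shows "measure_pmf.prob (noise_vec d N p) {a. \<exists>i\<in>I. a i \<noteq> 0} \<le> card I * p"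
proof -
  have "finite I"
    using assms(1) finite_subset by blast
  have "{a. \<exists>i\<in>I. a i \<noteq> 0} = (\<Union>i\<in>I. {a. a i \<noteq> 0})"
    by auto
  also have "measure_pmf.prob (noise_vec d N p) \<dots> \<le> (\<Sum>i\<in>I. measure_pmf.prob (noise_vec d N p) {a. a i \<noteq> 0})"
    by (rule measure_UNION_le) (use \<open>finite I\<close> in auto)
  also have "\<dots> = card I * p"
    using assms by (simp add: subset_iff prob_noise_vec_coord_nonzero)
  finally show ?thesis .
qed

lemma finite_nearest_set: "finite (nearest_set d c K W w j)"
  unfolding nearest_set_def by simp

lemma nearest_set_nonempty:
  assumes "K \<ge> 1"
  shows "nearest_set d c K W w j \<noteq> {}"
proof -
  let ?f = "\<lambda>k. block_dist d c j w (W k)"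
  let ?k = "arg_min_on ?f {1..K}"
  have "{1..K} \<noteq> {}"
    using assms by simp
  then have "?k \<in> {1..K}"
    by (intro arg_min_if_finite(1)) auto
  moreover have "\<forall>k'\<in>{1..K}. ?f ?k \<le> ?f k'"
    using \<open>{1..K} \<noteq> {}\<close> by (intro ballI arg_min_least) auto
  ultimately have "?k \<in> nearest_set d c K W w j"
    unfolding nearest_set_def by blast
  then show ?thesis
    by blast
qed

lemma nearest_set_eq_singleton:
  assumes "k \<in> {1..K}" "block_dist d c j w (W k) = 0"
    and "\<And>k'. k' \<in> {1..K} \<Longrightarrow> k' \<noteq> k \<Longrightarrow> block_dist d c j w (W k') > 0"
  shows "nearest_set d c K W w j = {k}"
proof (intro equalityI subsetI)
  fix k' assume "k' \<in> nearest_set d c K W w j"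
  then have "k' \<in> {1..K}" "block_dist d c j w (W k') \<le> block_dist d c j w (W k)"
    using assms(1) unfolding nearest_set_def by auto
  then show "k' \<in> {k}"
    using assms(2,3) by force
next
  fix k' assume "k' \<in> {k}"
  moreover have "block_dist d c j w (W k) \<le> block_dist d c j w (W k'')" for k''
    using assms(2) by (simp add: block_dist_def sum_nonneg)
  ultimately show "k' \<in> nearest_set d c K W w j"
    using assms(1) unfolding nearest_set_def by auto
qed

lemma argmax_set_eq_singleton:
  assumes "k \<in> {1..K}" "2 * card {j. j < c \<and> U j \<noteq> k} < c"
  shows "argmax_set c K U = {k}"
proof -
  let ?D = "{j. j < c \<and> U j \<noteq> k}"
  have "card {j. j < c \<and> U j = k} = card ({..<c} - ?D)"
    by (intro arg_cong[where f = card]) auto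
  also have "\<dots> = c - card ?D"
    by (subst card_Diff_subset) auto
  finally have votes_k: "vote_count c U k = c - card ?D"
    unfolding vote_count_def .
  have "vote_count c U k' \<le> card ?D" if "k' \<noteq> k" for k'
    unfolding vote_count_def using that by (intro card_mono) auto
  moreover have "card ?D < vote_count c U k"
    using votes_k assms(2) by linarith
  ultimately have beats: "vote_count c U k' < vote_count c U k" if "k' \<noteq> k" for k'
    using that le_less_trans by blast
  show ?thesis
  proof (intro equalityI subsetI)
    fix k' assume "k' \<in> argmax_set c K U"
    then have "vote_count c U k \<le> vote_count c U k'"
      using assms(1) unfolding argmax_set_def by blast
    then show "k' \<in> {k}"
      using beats by force
  next
    fix k' assume "k' \<in> {k}"
    moreover have "vote_count c U k'' \<le> vote_count c U k" for k''
      using beats by (cases "k'' = k") (auto intro: less_imp_le)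
    ultimately show "k' \<in> argmax_set c K U"
      using assms(1) unfolding argmax_set_def by auto
  qed
qed

lemma set_seg_rule_subset_singleton:
  assumes "k \<in> {1..K}" "2 * card {j. j < c \<and> nearest_set d c K W w j \<noteq> {k}} < c"
  shows "set_pmf (seg_rule d c K W w) \<subseteq> {k}"
proof -
  have "argmax_set c K U = {k}"
    if "U \<in> set_pmf (Pi_pmf {..<c} 0 (\<lambda>j. pmf_of_set (nearest_set d c K W w j)))" for U
  proof (rule argmax_set_eq_singleton[OF assms(1)])
    have "U j \<in> nearest_set d c K W w j" if "j < c" for j
      using \<open>U \<in> _\<close> that assms(1) finite_nearest_set nearest_set_nonempty
      by (auto simp: set_Pi_pmf PiE_dflt_def)
    then have "card {j. j < c \<and> U j \<noteq> k} \<le> card {j. j < c \<and> nearest_set d c K W w j \<noteq> {k}}"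
      by (intro card_mono) auto
    then show "2 * card {j. j < c \<and> U j \<noteq> k} < c"
      using assms(2) by linarith
  qed
  then show ?thesis
    unfolding seg_rule_def by auto
qed

lemma nearest_set_clean_block:
  assumes "d = c * l" "j < c" "l \<ge> 1"
    and "\<forall>i\<in>{j*l..<j*l+l}. a i = 0 \<and> b i = 0 \<and> e i = 0"
  shows "nearest_set d c 2 (\<lambda>k. if k = 1 then b else (\<lambda>i. m2B d l i + e i)) a j = {1}"
proof (rule nearest_set_eq_singleton)
  let ?W = "\<lambda>k::nat. if k = 1 then b else (\<lambda>i. m2B d l i + e i)"
  have block: "d div c = l"
    using assms(1,2) by simp
  have zero: "a (j*l+i) = 0 \<and> b (j*l+i) = 0 \<and> e (j*l+i) = 0" if "i < l" for i
    using assms(4) that by simp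
  then show "block_dist d c j a (?W 1) = 0"
    unfolding block_dist_def block by simp
  have "j * l < d"
    using assms(1-3) by simp
  \<comment> \<open>the first coordinate of block \<open>j\<close> is where \<open>m\<^sub>2\<close> differs from \<open>m\<^sub>1\<close>\<close>
  then have "1 = (a (j*l+0) - ?W 2 (j*l+0))^2"
    using zero[of 0] assms(3) by (simp add: m2B_def)
  also have "\<dots> \<le> (\<Sum>i<l. (a (j*l+i) - ?W 2 (j*l+i))^2)"
    by (rule member_le_sum[where f = "\<lambda>i. (a (j*l+i) - ?W 2 (j*l+i))^2"]) (use assms(3) in auto)
  finally have "block_dist d c j a (?W 2) > 0"
    unfolding block_dist_def block by simp
  then show "block_dist d c j a (?W k') > 0" if "k' \<in> {1..2}" "k' \<noteq> 1" for k'
    using that by (auto simp: le_Suc_eq numeral_2_eq_2)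
qed simp

lemma misclass_B_le:
  assumes d: "d = c * l" and "c \<ge> 1" "l \<ge> 1" "N \<noteq> 0" "0 \<le> p" "p \<le> 1"
  shows "misclass_B d c l N p \<le> 6 * real l * p"
proof -
  define M where "M = noise_vec d N p"
  define J where "J = pair_pmf M (pair_pmf M M)"
  define A :: "nat \<Rightarrow> (nat \<Rightarrow> real) set" where "A j = {a. \<exists>i\<in>{j*l..<j*l+l}. a i \<noteq> 0}" for j
  define E where "E j = {t. fst t \<in> A j \<or> fst (snd t) \<in> A j \<or> snd (snd t) \<in> A j}" for j
  define W where "W t = (\<lambda>k::nat. if k = 1 then fst (snd t) else (\<lambda>i. m2B d l i + snd (snd t) i))"
    for t :: "(nat \<Rightarrow> real) \<times> (nat \<Rightarrow> real) \<times> (nat \<Rightarrow> real)"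
  define S where "S t = seg_rule d c 2 (W t) (fst t)" for t
  have "misclass_B d c l N p = measure_pmf.prob (bind_pmf J S) {k. k \<noteq> 1}"
    unfolding misclass_B_def J_def S_def W_def M_def by (simp only: bind_pmf_triple_eq_bind_pair_pmf)
  also have "\<dots> \<le> measure_pmf.prob J {t. real c / 2 \<le> card {j\<in>{..<c}. t \<in> E j}}"
  proof (rule prob_bind_pmf_le)
    fix t assume "t \<notin> {t. real c / 2 \<le> card {j\<in>{..<c}. t \<in> E j}}"
    then have few: "2 * card {j. j < c \<and> t \<in> E j} < c"
      by auto
    have "nearest_set d c 2 (W t) (fst t) j = {1}" if "j < c" "t \<notin> E j" for j
      unfolding W_def using that d \<open>l \<ge> 1\<close> by (intro nearest_set_clean_block) (auto simp: E_def A_def)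
    then have "card {j. j < c \<and> nearest_set d c 2 (W t) (fst t) j \<noteq> {1}} \<le> card {j. j < c \<and> t \<in> E j}"
      by (intro card_mono) auto
    then have "set_pmf (S t) \<subseteq> {1}"
      unfolding S_def using few by (intro set_seg_rule_subset_singleton) auto
    then show "set_pmf (S t) \<inter> {k. k \<noteq> 1} = {}"
      by auto
  qed
  also have "\<dots> \<le> (\<Sum>j<c. measure_pmf.prob J (E j)) / (real c / 2)"
    using \<open>c \<ge> 1\<close> by (intro prob_card_events_ge_le) auto
  also have "\<dots> \<le> (\<Sum>j<c. 3 * (l * p)) / (real c / 2)"
  proof (intro divide_right_mono sum_mono)
    fix j assume "j \<in> {..<c}"
    then have "(j + 1) * l \<le> d"
      unfolding d by (intro mult_right_mono) auto
    then have "{j*l..<j*l+l} \<subseteq> {..<d}"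
      by auto
    from prob_noise_vec_nonzero_on_le[OF this assms(4-6)]
    have "measure_pmf.prob M (A j) \<le> l * p"
      unfolding M_def A_def by simp
    then show "measure_pmf.prob J (E j) \<le> 3 * (l * p)"
      unfolding J_def E_def using prob_pair_pmf_triple_le[of M "A j"] by linarith
  qed simp
  also have "\<dots> = 6 * real l * p"
    using \<open>c \<ge> 1\<close> by (simp add: field_simps)
  finally show ?thesis .
qed

theorem proposition4:
  fixes l :: "nat \<Rightarrow> nat" and N p :: "nat \<Rightarrow> real"
  assumes l_pos: "\<And>d. d \<ge> 1 \<Longrightarrow> l d \<ge> 1"
    and l_dvd: "\<And>d. d \<ge> 1 \<Longrightarrow> l d dvd d"
    and N_pos: "\<And>d. d \<ge> 1 \<Longrightarrow> N d > 0"
    and p_pos: "\<And>d. d \<ge> 1 \<Longrightarrow> 0 < p d"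
    and p_lt1: "\<And>d. d \<ge> 1 \<Longrightarrow> p d < 1"
    and l_inf: "filterlim l at_top sequentially"
    and lp_0: "(\<lambda>d. real (l d) * p d) \<longlonglongrightarrow> 0"
  shows "(\<lambda>d. misclass_B d (d div l d) (l d) (N d) (p d)) \<longlonglongrightarrow> 0"
proof (rule Lim_null_comparison)
  show "\<forall>\<^sub>F d in sequentially. norm (misclass_B d (d div l d) (l d) (N d) (p d)) \<le> 6 * (real (l d) * p d)"
  proof (rule eventually_sequentiallyI)
    fix d :: nat assume "1 \<le> d"
    moreover have "l d dvd d" "l d \<ge> 1"
      using \<open>1 \<le> d\<close> l_dvd l_pos by auto
    ultimately have "d = d div l d * l d" "d div l d \<ge> 1"
      by (auto simp: Suc_le_eq div_greater_zero_iff dvd_imp_le)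
    then have "misclass_B d (d div l d) (l d) (N d) (p d) \<le> 6 * real (l d) * p d"
      using N_pos[OF \<open>1 \<le> d\<close>] p_pos[OF \<open>1 \<le> d\<close>] p_lt1[OF \<open>1 \<le> d\<close>] l_pos[OF \<open>1 \<le> d\<close>]
      by (intro misclass_B_le) auto
    then show "norm (misclass_B d (d div l d) (l d) (N d) (p d)) \<le> 6 * (real (l d) * p d)"
      unfolding misclass_B_def by simp
  qed
  show "(\<lambda>d. 6 * (real (l d) * p d)) \<longlonglongrightarrow> 0"
    using tendsto_mult_right_zero[OF lp_0] by simp
qed

end
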